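(* For every $\pi\in\Pi$, $x\in S$, $\alpha\in(0,1]$ and $\gamma\ge 1$, $$\mathrm{CVaR}^\pi_{\alpha,x}\Big(\max_{t=0,1,\dots,T} g_K(X_t)\Big) \le \frac{1}{\gamma}\log\Big(\frac{1}{\alpha}E_x^\pi\Big(\sum_{t=0}^T e^{\gamma g_K(X_t)}\Big)\Big).$$
   Context: Setting: $S$, $A$, $W$ are Borel spaces (states, controls, disturbances), $T\in\mathbb{N}$. The sample space is $\Omega = (S\times A)^T\times S$ with its Borel $\sigma$-algebra $\mathcal{B}(\Omega)$; for $\omega=(x_0,u_0,\dots,x_{T-1},u_{T-1},x_T)$, $X_t(\omega)=x_t$ and $U_t(\omega)=u_t$. A Borel-measurable map $f:S\times A\times W\to S$ and a probability distribution $P_D$ on $W$ define the transition kernel $Q(B\mid x,u) = P_D(\{d\in W: f(x,u,d)\in B\})$ for $B\in\mathcal{B}(S)$. $\Pi$ is the set of randomized history-dependent policies $\pi=(\pi_0,\dots,\pi_{T-1})$, each $\pi_t$ a Borel-measurable stochastic kernel on $A$ given $H^t=(S\times A)^t\times S$. For $x\in S$, $\pi\in\Pi$, $P_x^\pi$ is the unique probability measure on $(\Omega,\mathcal{B}(\Omega))$ (Ionescu-Tulcea) under which $X_0=x$, $U_t$ is distributed according to $\pi_t(\cdot\mid X_0,U_0,\dots,X_t)$, and $X_{t+1}$ is distributed according to $Q(\cdot\mid X_t,U_t)$; $E_x^\pi$ denotes expectation under $P_x^\pi$. A constraint set $K\in\mathcal{B}(S)$ and a bounded Borel-measurable $g_K:S\to\mathbb{R}$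 are given. For a probability space $(\Omega,\mathcal{F},\mu)$, $Y\in L^1$ and $\alpha\in(0,1]$, $\mathrm{CVaR}_\alpha(Y) := \inf_{s\in\mathbb{R}}\big(s + \tfrac{1}{\alpha}E(\max(Y-s,0))\big)$. $\mathrm{CVaR}^\pi_{\alpha,x}$ denotes CVaR computed with respect to $P_x^\pi$. *)

theory Defs
  imports "HOL-Probability.Probability"
begin

text \<open>Sample space \<Omega> = (S \<times> A)^T \<times> S, represented (isomorphically) as pairs
  (xs, us) of extensional functions: xs on {..T} (states), us on {..<T} (controls).\<close>

definition hist_space :: "nat \<Rightarrow> ((nat \<Rightarrow> 's::topological_space) \<times> (nat \<Rightarrow> 'a::topological_space)) measure" where
  "hist_space t = (PiM {..t} (\<lambda>_. borel)) \<Otimes>\<^sub>M (PiM {..<t} (\<lambda>_. borel))"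

definition Xc :: "nat \<Rightarrow> (nat \<Rightarrow> 's) \<times> (nat \<Rightarrow> 'a) \<Rightarrow> 's" where
  "Xc t \<omega> = fst \<omega> t"

definition Uc :: "nat \<Rightarrow> (nat \<Rightarrow> 's) \<times> (nat \<Rightarrow> 'a) \<Rightarrow> 'a" where
  "Uc t \<omega> = snd \<omega> t"

definition trans_kernel :: "('s \<times> 'a \<times> 'w \<Rightarrow> 's::topological_space) \<Rightarrow> 'w measure \<Rightarrow> 's \<Rightarrow> 'a \<Rightarrow> 's measure" where
  "trans_kernel f PD x u = distr PD borel (\<lambda>d. f (x, u, d))"

definition is_policy :: "nat \<Rightarrow> (nat \<Rightarrow> (nat \<Rightarrow> 's::topological_space) \<times> (nat \<Rightarrow> 'a::topological_space) \<Rightarrow> 'a measure) \<Rightarrow> bool" where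
  "is_policy T \<pi> \<longleftrightarrow> (\<forall>t<T. \<pi> t \<in> hist_space t \<rightarrow>\<^sub>M prob_algebra borel)"

text \<open>Law of the partial trajectory (X_0,U_0,...,X_t) under initial state x and policy pi
  (Ionescu-Tulcea construction for finite horizon, via the Giry monad).\<close>
fun traj_measure :: "('s \<times> 'a \<times> 'w \<Rightarrow> 's::topological_space) \<Rightarrow> 'w measure \<Rightarrow> 's \<Rightarrow>
     (nat \<Rightarrow> (nat \<Rightarrow> 's) \<times> (nat \<Rightarrow> 'a::topological_space) \<Rightarrow> 'a measure) \<Rightarrow> nat \<Rightarrow>
     ((nat \<Rightarrow> 's) \<times> (nat \<Rightarrow> 'a)) measure" where
  "traj_measure f PD x \<pi> 0 = return (hist_space 0) ((\<lambda>i\<in>{..0}. x), (\<lambda>i\<in>{..<0}. undefined))"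
| "traj_measure f PD x \<pi> (Suc t) =
     traj_measure f PD x \<pi> t \<bind> (\<lambda>\<omega>.
       \<pi> t \<omega> \<bind> (\<lambda>u.
         trans_kernel f PD (fst \<omega> t) u \<bind> (\<lambda>y.
           return (hist_space (Suc t)) ((fst \<omega>)(Suc t := y), (snd \<omega>)(t := u)))))"

definition path_measure :: "nat \<Rightarrow> ('s \<times> 'a \<times> 'w \<Rightarrow> 's::topological_space) \<Rightarrow> 'w measure \<Rightarrow> 's \<Rightarrow>
     (nat \<Rightarrow> (nat \<Rightarrow> 's) \<times> (nat \<Rightarrow> 'a::topological_space) \<Rightarrow> 'a measure) \<Rightarrow>
     ((nat \<Rightarrow> 's) \<times> (nat \<Rightarrow> 'a)) measure" where
  "path_measure T f PD x \<pi> = traj_measure f PD x \<pi> T"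

definition CVaR :: "'b measure \<Rightarrow> real \<Rightarrow> ('b \<Rightarrow> real) \<Rightarrow> real" where
  "CVaR M \<alpha> Y = (INF s::real. s + (1 / \<alpha>) * (\<integral>\<omega>. max (Y \<omega> - s) 0 \<partial>M))"

end

theory Submission
  imports Defs
begin

text \<open>CVaR is an infimum over s, so every single s bounds it from above. The elementary
  inequality max y 0 \<le> exp (\<gamma> y - 1) / \<gamma> bounds the shortfall E max (Y - s) 0 by
  exp (- \<gamma> s - 1) E exp (\<gamma> Y) / \<gamma>, and minimising the resulting bound over s yields
  (1/\<gamma>) ln (E exp (\<gamma> Y) / \<alpha>). For Y = max_t g_K(X_t) one then uses
  exp (\<gamma> max_t g_K(X_t)) \<le> \<Sum>_t exp (\<gamma> g_K(X_t)).\<close>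

lemma space_hist_space:
  "space (hist_space t) = (\<Pi>\<^sub>E i\<in>{..t}. UNIV) \<times> (\<Pi>\<^sub>E i\<in>{..<t}. UNIV)"
  by (simp add: hist_space_def space_pair_measure space_PiM)

lemma measurable_hist_state [measurable]:
  "t \<le> T \<Longrightarrow> (\<lambda>\<omega>. fst \<omega> t) \<in> hist_space T \<rightarrow>\<^sub>M borel"
  unfolding hist_space_def by measurable

lemma measurable_hist_extend:
  "(\<lambda>((\<omega>, u), y). ((fst \<omega>)(Suc t := y), (snd \<omega>)(t := u)))
     \<in> (hist_space t \<Otimes>\<^sub>M borel) \<Otimes>\<^sub>M borel \<rightarrow>\<^sub>M hist_space (Suc t)"
  unfolding hist_space_def case_prod_beta
  by (intro measurable_Pair measurable_fun_upd[where J="{..t}"] measurable_fun_upd[where J="{..<t}"])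
     (auto simp: lessThan_Suc atMost_Suc)

lemma measurable_trans_kernel:
  assumes "f \<in> (borel \<Otimes>\<^sub>M borel \<Otimes>\<^sub>M borel) \<rightarrow>\<^sub>M borel"
    and "prob_space PD" "sets PD = sets borel"
    and [measurable]: "g \<in> N \<rightarrow>\<^sub>M borel" "h \<in> N \<rightarrow>\<^sub>M borel"
  shows "(\<lambda>z. trans_kernel f PD (g z) (h z)) \<in> N \<rightarrow>\<^sub>M prob_algebra borel"
  unfolding trans_kernel_def
proof (rule measurable_distr_prob_space2)
  show "(\<lambda>_. PD) \<in> N \<rightarrow>\<^sub>M prob_algebra PD"
    using assms(2) by (simp add: space_prob_algebra)
  have "(\<lambda>(z, d). f (g z, h z, d)) \<in> N \<Otimes>\<^sub>M borel \<rightarrow>\<^sub>M borel"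
    using assms(1) by measurable
  then show "(\<lambda>(z, d). f (g z, h z, d)) \<in> N \<Otimes>\<^sub>M PD \<rightarrow>\<^sub>M borel"
    by (simp add: measurable_cong_sets[OF sets_pair_measure_cong[OF refl assms(3)] refl])
qed

lemma measurable_traj_step:
  assumes "f \<in> (borel \<Otimes>\<^sub>M borel \<Otimes>\<^sub>M borel) \<rightarrow>\<^sub>M borel"
    and "prob_space PD" "sets PD = sets borel"
    and "\<pi> t \<in> hist_space t \<rightarrow>\<^sub>M prob_algebra borel"
  shows "(\<lambda>\<omega>. \<pi> t \<omega> \<bind> (\<lambda>u. trans_kernel f PD (fst \<omega> t) u \<bind> (\<lambda>y.
           return (hist_space (Suc t)) ((fst \<omega>)(Suc t := y), (snd \<omega>)(t := u)))))
     \<in> hist_space t \<rightarrow>\<^sub>M prob_algebra (hist_space (Suc t))"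
proof (rule measurable_bind_prob_space2)
  have kernel: "(\<lambda>z. trans_kernel f PD (fst (fst z) t) (snd z))
      \<in> hist_space t \<Otimes>\<^sub>M borel \<rightarrow>\<^sub>M prob_algebra borel"
    by (intro measurable_trans_kernel[OF assms(1-3)] measurable_snd
        measurable_compose[OF measurable_fst measurable_hist_state]) simp
  have extend: "(\<lambda>(z, y). return (hist_space (Suc t)) ((fst (fst z))(Suc t := y), (snd (fst z))(t := snd z)))
      \<in> (hist_space t \<Otimes>\<^sub>M borel) \<Otimes>\<^sub>M borel \<rightarrow>\<^sub>M prob_algebra (hist_space (Suc t))"
    using measurable_compose[OF measurable_hist_extend measurable_return_prob_space]
    by (simp add: case_prod_beta')
  show "(\<lambda>(\<omega>, u). trans_kernel f PD (fst \<omega> t) u \<bind> (\<lambda>y.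
      return (hist_space (Suc t)) ((fst \<omega>)(Suc t := y), (snd \<omega>)(t := u))))
      \<in> hist_space t \<Otimes>\<^sub>M borel \<rightarrow>\<^sub>M prob_algebra (hist_space (Suc t))"
    using measurable_bind_prob_space2[OF kernel extend] by (simp add: case_prod_beta')
qed (fact assms(4))

lemma traj_measure_in_prob_algebra:
  assumes f: "f \<in> (borel \<Otimes>\<^sub>M borel \<Otimes>\<^sub>M borel) \<rightarrow>\<^sub>M borel"
    and PD: "prob_space PD" "sets PD = sets borel"
    and pol: "is_policy T \<pi>"
  shows "t \<le> T \<Longrightarrow> traj_measure f PD x \<pi> t \<in> space (prob_algebra (hist_space t))"
proof (induction t)
  case 0
  have "((\<lambda>i\<in>{..0}. x), (\<lambda>i\<in>{..<0::nat}. undefined)) \<in> space (hist_space 0)"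
    by (simp add: space_hist_space)
  then show ?case
    using measurable_space[OF measurable_return_prob_space] by simp
next
  case (Suc t)
  then have "\<pi> t \<in> hist_space t \<rightarrow>\<^sub>M prob_algebra borel"
    using pol unfolding is_policy_def by simp
  note step = measurable_traj_step[of f PD \<pi> t, OF f PD this]
  have "traj_measure f PD x \<pi> t \<in> space (prob_algebra (hist_space t))"
    using Suc by simp
  from prob_space_bind'[OF this step] sets_bind'[OF this step] show ?case
    by (simp add: space_prob_algebra)
qed

lemma path_measure_prob_space:
  assumes "f \<in> (borel \<Otimes>\<^sub>M borel \<Otimes>\<^sub>M borel) \<rightarrow>\<^sub>M borel"
    and "prob_space PD" "sets PD = sets borel"
    and "is_policy T \<pi>"
  shows "prob_space (path_measure T f PD x \<pi>)"
    and "sets (path_measure T f PD x \<pi>) = sets (hist_space T)"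
  using traj_measure_in_prob_algebra[OF assms, of T x]
  by (auto simp: path_measure_def space_prob_algebra)

lemma max_zero_le_exp:
  fixes \<gamma> y :: real
  assumes "0 < \<gamma>"
  shows "max y 0 \<le> exp (\<gamma> * y - 1) / \<gamma>"
proof -
  have "\<gamma> * y \<le> exp (\<gamma> * y - 1)"
    using exp_ge_add_one_self[of "\<gamma> * y - 1"] by simp
  with assms show ?thesis
    by (auto simp: max_def pos_le_divide_eq mult.commute)
qed

lemma exp_Max_le_sum_exp:
  fixes g :: "'b \<Rightarrow> real"
  assumes "finite A" "A \<noteq> {}"
  shows "exp (c * Max (g ` A)) \<le> (\<Sum>a\<in>A. exp (c * g a))"
proof -
  have "Max (g ` A) \<in> g ` A"
    using assms by (intro Max_in) auto
  then obtain a where "a \<in> A" "Max (g ` A) = g a"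
    by auto
  then show ?thesis
    using assms by (auto intro!: member_le_sum)
qed

context prob_space
begin

lemma integrable_shortfall:
  fixes Y :: "'a \<Rightarrow> real"
  assumes Y: "Y \<in> borel_measurable M" "\<And>\<omega>. \<omega> \<in> space M \<Longrightarrow> \<bar>Y \<omega>\<bar> \<le> B"
  shows "integrable M (\<lambda>\<omega>. max (Y \<omega> - r) 0)"
proof -
  obtain \<omega>\<^sub>0 where "\<omega>\<^sub>0 \<in> space M"
    using not_empty by blast
  then have "0 \<le> B"
    using Y(2) abs_ge_zero[of "Y \<omega>\<^sub>0"] by (meson order_trans)
  then have "\<bar>max (Y \<omega> - r) 0\<bar> \<le> B + \<bar>r\<bar>" if "\<omega> \<in> space M" for \<omega>
    using Y(2)[OF that] by (smt (verit))
  then show ?thesis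
    using Y(1) by (intro integrable_const_bound[where B="B + \<bar>r\<bar>"] AE_I2) auto
qed

lemma CVaR_le:
  fixes Y :: "'a \<Rightarrow> real"
  assumes Y: "Y \<in> borel_measurable M" "\<And>\<omega>. \<omega> \<in> space M \<Longrightarrow> \<bar>Y \<omega>\<bar> \<le> B"
    and \<alpha>: "0 < \<alpha>" "\<alpha> \<le> 1"
  shows "CVaR M \<alpha> Y \<le> s + (1 / \<alpha>) * (\<integral>\<omega>. max (Y \<omega> - s) 0 \<partial>M)"
  unfolding CVaR_def
proof (rule cINF_lower)
  have "- B \<le> r + (1 / \<alpha>) * (\<integral>\<omega>. max (Y \<omega> - r) 0 \<partial>M)" for r
  proof -
    define I where "I = (\<integral>\<omega>. max (Y \<omega> - r) 0 \<partial>M)"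
    have "- B - r \<le> max (Y \<omega> - r) 0" if "\<omega> \<in> space M" for \<omega>
      using Y(2)[OF that] by (smt (verit))
    then have "(\<integral>\<omega>. - B - r \<partial>M) \<le> I"
      unfolding I_def using integrable_shortfall[OF Y] by (intro integral_mono) auto
    then have "- B - r \<le> I"
      by (simp add: prob_space)
    moreover have "0 \<le> I"
      unfolding I_def by (rule integral_nonneg_AE) simp
    then have "I \<le> (1 / \<alpha>) * I"
      using \<alpha> by (simp add: field_simps mult_left_le)
    ultimately show ?thesis
      unfolding I_def by linarith
  qed
  then show "bdd_below (range (\<lambda>r. r + (1 / \<alpha>) * (\<integral>\<omega>. max (Y \<omega> - r) 0 \<partial>M)))"
    by (intro bdd_belowI2)
qed simp

lemma CVaR_le_ln_integral_exp_majorant: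
  fixes Y :: "'a \<Rightarrow> real"
  assumes Y: "Y \<in> borel_measurable M" "\<And>\<omega>. \<omega> \<in> space M \<Longrightarrow> \<bar>Y \<omega>\<bar> \<le> B"
    and Z: "integrable M Z" "\<And>\<omega>. \<omega> \<in> space M \<Longrightarrow> exp (\<gamma> * Y \<omega>) \<le> Z \<omega>"
    and \<alpha>: "0 < \<alpha>" "\<alpha> \<le> 1"
    and \<gamma>: "0 < \<gamma>"
  shows "CVaR M \<alpha> Y \<le> (1 / \<gamma>) * ln ((1 / \<alpha>) * (\<integral>\<omega>. Z \<omega> \<partial>M))"
proof -
  define E where "E = (\<integral>\<omega>. Z \<omega> \<partial>M)"
  have "exp (- \<gamma> * B) \<le> Z \<omega>" if "\<omega> \<in> space M" for \<omega>
  proof -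
    have "- \<gamma> * B \<le> \<gamma> * Y \<omega>"
      using Y(2)[OF that] \<gamma> mult_left_mono[of "- B" "Y \<omega>" \<gamma>] by (simp add: abs_le_iff)
    then show ?thesis
      using Z(2)[OF that] by (meson exp_le_cancel_iff order_trans)
  qed
  then have "(\<integral>\<omega>. exp (- \<gamma> * B) \<partial>M) \<le> E"
    unfolding E_def using Z(1) by (intro integral_mono) auto
  then have "0 < E"
    by (simp add: prob_space less_le_trans[OF exp_gt_zero])
  \<comment> \<open>the minimiser of s + exp (- \<gamma> s - 1) E / (\<alpha> \<gamma>)\<close>
  define s where "s = (ln (E / \<alpha>) - 1) / \<gamma>"
  have "- (\<gamma> * s) - 1 = - ln (E / \<alpha>)"
    using \<gamma> by (simp add: s_def field_simps)
  then have exp_s: "exp (- (\<gamma> * s) - 1) = \<alpha> / E"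
    using \<open>0 < E\<close> \<alpha> by (simp add: exp_minus)
  have "max (Y \<omega> - s) 0 \<le> \<alpha> / (\<gamma> * E) * Z \<omega>" if "\<omega> \<in> space M" for \<omega>
  proof -
    have "max (Y \<omega> - s) 0 \<le> exp (\<gamma> * (Y \<omega> - s) - 1) / \<gamma>"
      by (rule max_zero_le_exp[OF \<gamma>])
    also have "\<gamma> * (Y \<omega> - s) - 1 = \<gamma> * Y \<omega> + (- (\<gamma> * s) - 1)"
      by (simp add: algebra_simps)
    also have "exp \<dots> / \<gamma> = \<alpha> / (\<gamma> * E) * exp (\<gamma> * Y \<omega>)"
      by (simp add: exp_add exp_s mult.commute)
    also have "\<dots> \<le> \<alpha> / (\<gamma> * E) * Z \<omega>"
      using Z(2)[OF that] \<alpha> \<gamma> \<open>0 < E\<close> by (intro mult_left_mono) auto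
    finally show ?thesis .
  qed
  then have "(\<integral>\<omega>. max (Y \<omega> - s) 0 \<partial>M) \<le> (\<integral>\<omega>. \<alpha> / (\<gamma> * E) * Z \<omega> \<partial>M)"
    using integrable_shortfall[OF Y] Z(1) by (intro integral_mono) auto
  also have "\<dots> = \<alpha> / \<gamma>"
    using \<open>0 < E\<close> by (simp add: E_def)
  finally have "(1 / \<alpha>) * (\<integral>\<omega>. max (Y \<omega> - s) 0 \<partial>M) \<le> 1 / \<gamma>"
    using \<alpha> by (simp add: divide_le_eq mult.commute)
  then have "CVaR M \<alpha> Y \<le> s + 1 / \<gamma>"
    using CVaR_le[OF Y \<alpha>, of s] by linarith
  also have "\<dots> = (1 / \<gamma>) * ln ((1 / \<alpha>) * E)"
    using \<gamma> by (simp add: s_def field_simps)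
  finally show ?thesis
    unfolding E_def .
qed

end

theorem theorem1:
  fixes T :: nat
    and f :: "'s::polish_space \<times> 'a::polish_space \<times> 'w::polish_space \<Rightarrow> 's"
    and PD :: "'w measure"
    and K :: "'s set"
    and gK :: "'s \<Rightarrow> real"
    and \<pi> :: "nat \<Rightarrow> (nat \<Rightarrow> 's) \<times> (nat \<Rightarrow> 'a) \<Rightarrow> 'a measure"
    and x :: 's
    and \<alpha> \<gamma> :: real
  assumes f_meas: "f \<in> (borel \<Otimes>\<^sub>M borel \<Otimes>\<^sub>M borel) \<rightarrow>\<^sub>M borel"
    and PD: "prob_space PD" "sets PD = sets borel"
    and K: "K \<in> sets borel"
    and g_meas: "gK \<in> borel_measurable borel"
    and g_bdd: "bounded (range gK)"
    and pol: "is_policy T \<pi>"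
    and \<alpha>: "0 < \<alpha>" "\<alpha> \<le> 1"
    and \<gamma>: "1 \<le> \<gamma>"
  shows "CVaR (path_measure T f PD x \<pi>) \<alpha> (\<lambda>\<omega>. Max ((\<lambda>t. gK (Xc t \<omega>)) ` {..T}))
           \<le> (1 / \<gamma>) * ln ((1 / \<alpha>) *
               (\<integral>\<omega>. (\<Sum>t\<le>T. exp (\<gamma> * gK (Xc t \<omega>))) \<partial>(path_measure T f PD x \<pi>)))"
proof -
  define M where "M = path_measure T f PD x \<pi>"
  note M = path_measure_prob_space[OF f_meas PD pol, of x, folded M_def]
  interpret prob_space M by (fact M)
  have state_cost: "(\<lambda>\<omega>. gK (Xc t \<omega>)) \<in> borel_measurable M" if "t \<le> T" for t
    unfolding Xc_def measurable_cong_sets[OF M(2) refl] using that g_meas by measurable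
  obtain B where B: "\<And>y. \<bar>gK y\<bar> \<le> B"
    using g_bdd unfolding bounded_iff by auto
  define Y where "Y \<omega> = Max ((\<lambda>t. gK (Xc t \<omega>)) ` {..T})"
    for \<omega> :: "(nat \<Rightarrow> 's) \<times> (nat \<Rightarrow> 'a)"
  define Z where "Z \<omega> = (\<Sum>t\<le>T. exp (\<gamma> * gK (Xc t \<omega>)))"
    for \<omega> :: "(nat \<Rightarrow> 's) \<times> (nat \<Rightarrow> 'a)"
  have "\<bar>Y \<omega>\<bar> \<le> B" for \<omega>
  proof -
    have "Y \<omega> \<in> (\<lambda>t. gK (Xc t \<omega>)) ` {..T}"
      unfolding Y_def by (intro Max_in) auto
    then show ?thesis
      using B by auto
  qed
  moreover have "Y \<in> borel_measurable M"
    unfolding Y_def using state_cost by (intro borel_measurable_Max) auto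
  moreover have "integrable M Z"
  proof -
    have "\<gamma> * gK y \<le> \<gamma> * B" for y
      using B[of y] \<gamma> by (intro mult_left_mono) (auto simp: abs_le_iff)
    then have "integrable M (\<lambda>\<omega>. exp (\<gamma> * gK (Xc t \<omega>)))" if "t \<le> T" for t
      using state_cost[OF that] by (intro integrable_const_bound[where B="exp (\<gamma> * B)"] AE_I2) auto
    then show ?thesis
      unfolding Z_def by (intro Bochner_Integration.integrable_sum) auto
  qed
  moreover have "exp (\<gamma> * Y \<omega>) \<le> Z \<omega>" for \<omega>
    unfolding Y_def Z_def by (rule exp_Max_le_sum_exp) auto
  ultimately have "CVaR M \<alpha> Y \<le> (1 / \<gamma>) * ln ((1 / \<alpha>) * (\<integral>\<omega>. Z \<omega> \<partial>M))"
    using \<alpha> \<gamma> by (intro CVaR_le_ln_integral_exp_majorant) auto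
  then show ?thesis
    unfolding M_def Y_def Z_def .
qed

end
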